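(* Let $V$ be a real vector space and $X\subseteq V$. If $X$ contains convexly independent subsets of arbitrarily large finite size, then $X$ contains an infinite convexly independent subset.
   Context: A subset $Y\subseteq V$ is convexly independent if $y\notin\mathrm{conv}(Y\setminus\{y\})$ for every $y\in Y$, where $\mathrm{conv}$ denotes the convex hull. *)

theory Defs
  imports "HOL-Analysis.Analysis"
begin

definition convexly_independent :: "'a::real_vector set \<Rightarrow> bool" where
  "convexly_independent Y \<longleftrightarrow> (\<forall>y\<in>Y. y \<notin> convex hull (Y - {y}))"

end

theory Submission
  imports Defs "HOL-Library.Ramsey"
begin

text \<open>
  A convexly independent set meets every line in at most two points, so finitely many lines
  cannot cover \<open>X\<close>. Greedily, \<open>X\<close> therefore contains a sequence \<open>p\<^sub>0, p\<^sub>1, \<dots>\<close> with no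
  three points collinear. Two linear functionals chosen generically (a countable avoidance
  problem, solved on a Hamel basis by a moment-curve argument) project it to a planar sequence
  with distinct abscissae and no three points collinear. Ramsey's theorem for triples yields a
  subsequence along which the abscissae are monotone and all triangles have the same
  orientation; after reflecting, this is a strictly convex chain, every point of which is cut
  off from the others by a linear functional.
\<close>

lemma between_params_in_convex_hull:
  fixes a d :: "'a::real_vector"
  assumes "r \<le> s" "s \<le> t"
  shows "a + s *\<^sub>R d \<in> convex hull {a + r *\<^sub>R d, a + t *\<^sub>R d}"
proof -
  define u where "u = (s - r) / (t - r)"
  have "u * (t - r) = s - r"
    using assms by (cases "r = t") (auto simp: u_def)
  then have "(1 - u) * r + u * t = s"
    by (simp add: algebra_simps)
  moreover have "(1 - u) *\<^sub>R (a + r *\<^sub>R d) + u *\<^sub>R (a + t *\<^sub>R d) = a + ((1 - u) * r + u * t) *\<^sub>R d"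
    by (simp add: algebra_simps)
  moreover have "0 \<le> u" "u \<le> 1"
    using assms by (auto simp: u_def divide_le_eq_1)
  ultimately show ?thesis
    unfolding convex_hull_2 by (intro CollectI exI[of _ "1 - u"] exI[of _ u]) simp
qed

lemma three_in_affine_hull_2:
  fixes a b :: "'a::real_vector"
  assumes "x \<in> affine hull {a, b}" "y \<in> affine hull {a, b}" "z \<in> affine hull {a, b}"
  shows "x \<in> convex hull {y, z} \<or> y \<in> convex hull {x, z} \<or> z \<in> convex hull {x, y}"
proof -
  have "\<exists>s. w = a + s *\<^sub>R (b - a)" if w: "w \<in> affine hull {a, b}" for w
  proof -
    obtain u v where "w = u *\<^sub>R a + v *\<^sub>R b" "u + v = 1"
      using w unfolding affine_hull_2 by blast
    then have "w = a + v *\<^sub>R (b - a)"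
      by (simp add: algebra_simps flip: scaleR_add_left)
    then show ?thesis by blast
  qed
  then obtain r s t where "x = a + r *\<^sub>R (b - a)" "y = a + s *\<^sub>R (b - a)" "z = a + t *\<^sub>R (b - a)"
    using assms by metis
  moreover have "r \<le> s \<and> s \<le> t \<or> t \<le> s \<and> s \<le> r \<or> s \<le> r \<and> r \<le> t \<or>
      t \<le> r \<and> r \<le> s \<or> r \<le> t \<and> t \<le> s \<or> s \<le> t \<and> t \<le> r"
    by linarith
  ultimately show ?thesis
    using between_params_in_convex_hull[of r s t a "b - a"] between_params_in_convex_hull[of t s r a "b - a"]
      between_params_in_convex_hull[of s r t a "b - a"] between_params_in_convex_hull[of t r s a "b - a"]
      between_params_in_convex_hull[of r t s a "b - a"] between_params_in_convex_hull[of s t r a "b - a"]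
    by (auto simp: insert_commute)
qed

lemma convexly_independent_card_inter_affine_hull_2:
  fixes Y :: "'a::real_vector set"
  assumes ci: "convexly_independent Y"
  shows "card (Y \<inter> affine hull {a, b}) \<le> 2"
proof (rule ccontr)
  assume "\<not> ?thesis"
  then obtain T where "T \<subseteq> Y \<inter> affine hull {a, b}" "card T = 3"
    by (metis not_less_eq_eq numeral_2_eq_2 numeral_3_eq_3 obtain_subset_with_card_n)
  then obtain x y z where xyz: "x \<noteq> y" "y \<noteq> z" "x \<noteq> z"
    and Y: "x \<in> Y" "y \<in> Y" "z \<in> Y"
    and line: "x \<in> affine hull {a, b}" "y \<in> affine hull {a, b}" "z \<in> affine hull {a, b}"
    unfolding card_3_iff by auto
  have "v \<notin> convex hull {u, w}" if "v \<in> Y" "u \<in> Y - {v}" "w \<in> Y - {v}" for u v w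
    using ci that hull_mono[of "{u, w}" "Y - {v}"] unfolding convexly_independent_def by blast
  then show False
    using three_in_affine_hull_2[OF line] xyz Y by blast
qed

definition joining_lines :: "'a::real_vector set \<Rightarrow> 'a set" where
  "joining_lines F = (\<Union>a\<in>F. \<Union>b\<in>F. affine hull {a, b})"

lemma exists_outside_joining_lines:
  fixes X :: "'a::real_vector set"
  assumes large: "\<forall>n. \<exists>Y. Y \<subseteq> X \<and> finite Y \<and> card Y \<ge> n \<and> convexly_independent Y"
    and "finite F"
  shows "\<exists>x\<in>X. x \<notin> joining_lines F"
proof (rule ccontr)
  assume "\<not> ?thesis"
  then have X: "X \<subseteq> joining_lines F" by auto
  obtain Y where Y: "Y \<subseteq> X" "finite Y" "card Y \<ge> 2 * card (F \<times> F) + 1"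
    and ci: "convexly_independent Y"
    using spec[OF large, of "2 * card (F \<times> F) + 1"] by blast
  have "Y = (\<Union>p\<in>F \<times> F. Y \<inter> affine hull {fst p, snd p})"
    using X Y(1) unfolding joining_lines_def by fastforce
  then have "card Y \<le> (\<Sum>p\<in>F \<times> F. card (Y \<inter> affine hull {fst p, snd p}))"
    by (metis card_UN_le \<open>finite F\<close> finite_SigmaI)
  also have "\<dots> \<le> (\<Sum>p\<in>F \<times> F. 2)"
    by (intro sum_mono convexly_independent_card_inter_affine_hull_2[OF ci])
  finally show False
    using Y(3) by simp
qed

lemma not_collinear_if_outside_joining_lines:
  fixes p :: "nat \<Rightarrow> 'a::real_vector"
  assumes "\<And>n. p n \<notin> joining_lines (p ` {..<n})" "i < j" "j < k"
  shows "\<not> collinear {p i, p j, p k}"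
proof -
  have "p j \<notin> affine hull {p i}" "p k \<notin> affine hull {p i, p j}"
    using assms unfolding joining_lines_def by fastforce+
  moreover have "p i \<in> affine hull {p i}"
    by (simp add: hull_inc)
  ultimately have "p i \<noteq> p j" "p k \<notin> affine hull {p i, p j}"
    by auto
  then show ?thesis
    by (simp add: collinear_3_affine_hull)
qed

function greedy_seq :: "('a set \<Rightarrow> 'a) \<Rightarrow> nat \<Rightarrow> 'a" where
  "greedy_seq c n = c (set (map (greedy_seq c) [0..<n]))"
  by pat_completeness auto
termination
  by (relation "Wellfounded.measure snd") auto

declare greedy_seq.simps [simp del]

lemma greedy_seq_eq: "greedy_seq c n = c (greedy_seq c ` {..<n})"
  by (subst greedy_seq.simps) (simp add: atLeast0LessThan)

lemma exists_greedy_seq: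
  assumes "\<And>F. finite F \<Longrightarrow> \<exists>x\<in>X. x \<notin> B F"
  shows "\<exists>p :: nat \<Rightarrow> 'a. \<forall>n. p n \<in> X \<and> p n \<notin> B (p ` {..<n})"
proof -
  define c where "c F = (SOME x. x \<in> X \<and> x \<notin> B F)" for F
  have "c F \<in> X \<and> c F \<notin> B F" if "finite F" for F
    using someI_ex[of "\<lambda>x. x \<in> X \<and> x \<notin> B F"] assms[OF that] unfolding c_def by blast
  then have "greedy_seq c n \<in> X \<and> greedy_seq c n \<notin> B (greedy_seq c ` {..<n})" for n
    using greedy_seq_eq[of c n] by simp
  then show ?thesis
    by blast
qed

lemma finite_roots_sum_distinct_powers:
  fixes c :: "'b \<Rightarrow> real"
  assumes "finite R" "inj_on h R" "b0 \<in> R" "c b0 \<noteq> 0"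
  shows "finite {t. (\<Sum>b\<in>R. c b * t ^ h b) = 0}"
proof -
  define N where "N = Max (h ` R)"
  define d where "d i = (\<Sum>b\<in>{b\<in>R. h b = i}. c b)" for i
  have "(\<Sum>b\<in>R. c b * t ^ h b) = (\<Sum>i\<le>N. d i * t ^ i)" for t
  proof -
    have "(\<Sum>b\<in>R. c b * t ^ h b) = (\<Sum>i\<le>N. \<Sum>b\<in>{b\<in>R. h b = i}. c b * t ^ h b)"
      by (rule sum.group [symmetric]) (use assms(1) in \<open>auto simp: N_def\<close>)
    also have "\<dots> = (\<Sum>i\<le>N. d i * t ^ i)"
      unfolding d_def sum_distrib_right by (intro sum.cong refl) auto
    finally show ?thesis .
  qed
  moreover have "{b\<in>R. h b = h b0} = {b0}"
    using assms(2,3) by (auto dest: inj_onD)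
  then have "d (h b0) \<noteq> 0"
    using assms(4) by (simp add: d_def)
  moreover have "h b0 \<le> N"
    using assms(1,3) by (simp add: N_def)
  ultimately show ?thesis
    using polyfun_roots_finite[of d "h b0" N] by simp
qed

text \<open>Take a Hamel basis, number the basis vectors occurring in the elements of \<open>S\<close> and send
  the \<open>n\<close>-th of them to \<open>t\<^sup>n\<close>. Each \<open>v \<in> S\<close> is then mapped to a nonzero polynomial in \<open>t\<close>,
  so all but countably many \<open>t\<close> work.\<close>

lemma obtain_linear_functional_nonzero_on_countable:
  fixes S :: "'a::real_vector set"
  assumes "countable S" "0 \<notin> S"
  obtains l :: "'a \<Rightarrow> real" where "linear l" "\<And>v. v \<in> S \<Longrightarrow> l v \<noteq> 0"
proof -
  define B where "B = extend_basis ({}::'a set)"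
  have B: "independent B" "span B = UNIV"
    unfolding B_def using real_vector.independent_extend_basis[of "{}"]
      real_vector.span_extend_basis[of "{}"] real_vector.independent_empty by auto
  define R where "R v = {b. representation B v b \<noteq> 0}" for v
  have R: "finite (R v)" "R v \<subseteq> B" "(\<Sum>b\<in>R v. representation B v b *\<^sub>R b) = v" for v
    using real_vector.finite_representation real_vector.representation_ne_zero
      real_vector.sum_nonzero_representation_eq[OF B(1)] B(2)
    by (auto simp: R_def)
  define C where "C = (\<Union>v\<in>S. R v)"
  have "countable C"
    unfolding C_def using assms(1) R(1) by (blast intro: countable_finite)
  then have inj: "inj_on (to_nat_on C) C"
    by (rule inj_on_to_nat_on)
  define P where "P t v = (\<Sum>b\<in>R v. representation B v b * t ^ to_nat_on C b)" for t v
  have "finite {t. P t v = 0}" if v: "v \<in> S" for v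
  proof -
    obtain b0 where "b0 \<in> R v"
      using R(3)[of v] assms(2) v by force
    moreover have "R v \<subseteq> C"
      using v by (auto simp: C_def)
    ultimately show ?thesis
      unfolding P_def using R(1) inj_on_subset[OF inj]
      by (intro finite_roots_sum_distinct_powers) (auto simp: R_def)
  qed
  then have "countable (\<Union>v\<in>S. {t. P t v = 0})"
    using assms(1) by (blast intro: countable_finite)
  then obtain t where "t \<notin> (\<Union>v\<in>S. {t. P t v = 0})"
    using uncountable_UNIV_real by (metis countable_subset subsetI)
  then have t: "P t v \<noteq> 0" if "v \<in> S" for v
    using that by blast
  obtain l :: "'a \<Rightarrow> real" where l: "linear l" "\<forall>b\<in>B. l b = t ^ to_nat_on C b"
    using real_vector.linear_independent_extend[OF B(1), of "\<lambda>b. t ^ to_nat_on C b"] by blast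
  have "l v = P t v" if "v \<in> S" for v
  proof -
    have "l v = l (\<Sum>b\<in>R v. representation B v b *\<^sub>R b)"
      using R(3)[of v] by simp
    also have "\<dots> = (\<Sum>b\<in>R v. representation B v b * l b)"
      using l(1) by (simp add: linear_sum linear_cmul)
    also have "\<dots> = P t v"
      unfolding P_def using R(2) l(2) by (intro sum.cong) auto
    finally show ?thesis .
  qed
  with t show ?thesis
    by (intro that[OF l(1)]) simp
qed

definition orientation :: "('a \<Rightarrow> real) \<Rightarrow> ('a \<Rightarrow> real) \<Rightarrow> 'a \<Rightarrow> 'a \<Rightarrow> 'a \<Rightarrow> real" where
  "orientation f g a b c = (f b - f a) * (g c - g a) - (g b - g a) * (f c - f a)"

lemma orientation_scale:
  "orientation (\<lambda>v. r * f v) (\<lambda>v. s * g v) a b c = r * s * orientation f g a b c"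
  by (simp add: orientation_def algebra_simps)

lemma orientation_linear:
  assumes "linear f" "linear g"
  shows "orientation f g a b c = g (f (b - a) *\<^sub>R (c - a) - f (c - a) *\<^sub>R (b - a))"
  unfolding orientation_def
  by (simp only: linear_diff[OF assms(1)] linear_diff[OF assms(2)] linear_scale[OF assms(2)])
    (simp add: algebra_simps)

lemma collinear_if_scaleR_diff_eq:
  fixes a b c :: "'a::real_vector"
  assumes "\<alpha> \<noteq> 0" "\<alpha> *\<^sub>R (c - a) = \<beta> *\<^sub>R (b - a)"
  shows "collinear {a, b, c}"
proof -
  have "\<alpha> *\<^sub>R (c - a) = \<alpha> *\<^sub>R ((\<beta> / \<alpha>) *\<^sub>R (b - a))"
    using assms by simp
  then have "c - a = (\<beta> / \<alpha>) *\<^sub>R (b - a)"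
    using assms(1) scaleR_cancel_left by blast
  then have "c = (1 - \<beta> / \<alpha>) *\<^sub>R a + (\<beta> / \<alpha>) *\<^sub>R b"
    by (simp add: algebra_simps)
  then have "c \<in> affine hull {a, b}"
    unfolding affine_hull_2 by force
  then show ?thesis
    by (rule affine_hull_3_imp_collinear)
qed

lemma obtain_generic_planar_projection:
  fixes p :: "nat \<Rightarrow> 'a::real_vector"
  assumes noncollinear: "\<And>i j k. i < j \<Longrightarrow> j < k \<Longrightarrow> \<not> collinear {p i, p j, p k}"
  obtains l1 l2 :: "'a \<Rightarrow> real" where "linear l1" "linear l2"
    "\<And>i j. i < j \<Longrightarrow> l1 (p i) \<noteq> l1 (p j)"
    "\<And>i j k. i < j \<Longrightarrow> j < k \<Longrightarrow> orientation l1 l2 (p i) (p j) (p k) \<noteq> 0"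
proof -
  have diff_nonzero: "p j - p i \<noteq> 0" if "i < j" for i j
    using noncollinear[of i j "Suc j"] that by auto
  define D where "D = (\<lambda>(i, j). p j - p i) ` {(i, j). i < j}"
  have "countable D" "0 \<notin> D"
    using diff_nonzero by (auto simp: D_def)
  then obtain l1 :: "'a \<Rightarrow> real" where l1: "linear l1" "\<And>v. v \<in> D \<Longrightarrow> l1 v \<noteq> 0"
    by (rule obtain_linear_functional_nonzero_on_countable) blast
  have l1_diff: "l1 (p j - p i) \<noteq> 0" if "i < j" for i j
    using l1(2) that by (auto simp: D_def)
  define w where "w i j k = l1 (p j - p i) *\<^sub>R (p k - p i) - l1 (p k - p i) *\<^sub>R (p j - p i)" for i j k
  have w_nonzero: "w i j k \<noteq> 0" if "i < j" "j < k" for i j k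
    using collinear_if_scaleR_diff_eq[OF l1_diff[OF that(1)], where a = "p i" and b = "p j"
        and c = "p k" and \<beta> = "l1 (p k - p i)"] noncollinear[OF that]
    by (auto simp: w_def)
  define W where "W = (\<lambda>(i, j, k). w i j k) ` {(i, j, k). i < j \<and> j < k}"
  have "countable W" "0 \<notin> W"
    using w_nonzero by (auto simp: W_def)
  then obtain l2 :: "'a \<Rightarrow> real" where l2: "linear l2" "\<And>v. v \<in> W \<Longrightarrow> l2 v \<noteq> 0"
    by (rule obtain_linear_functional_nonzero_on_countable) blast
  show ?thesis
  proof (rule that[OF l1(1) l2(1)])
    show "l1 (p i) \<noteq> l1 (p j)" if "i < j" for i j
      using l1_diff[OF that] by (simp add: linear_diff[OF l1(1)])
    show "orientation l1 l2 (p i) (p j) (p k) \<noteq> 0" if "i < j" "j < k" for i j k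
      using l2(2)[of "w i j k"] that
      by (force simp: orientation_linear[OF l1(1) l2(1)] w_def W_def)
  qed
qed

lemma notin_convex_hull_if_linear_below:
  fixes g :: "'a::real_vector \<Rightarrow> real"
  assumes "linear g" "\<And>z. z \<in> S \<Longrightarrow> g y < g z"
  shows "y \<notin> convex hull S"
proof
  have "convex (g -` {g y<..})"
    using assms(1) by (intro convex_linear_vimage) (auto simp: convex_real_interval)
  moreover have "S \<subseteq> g -` {g y<..}"
    using assms(2) by auto
  ultimately have "convex hull S \<subseteq> g -` {g y<..}"
    by (rule hull_minimal[rotated])
  then show "y \<in> convex hull S \<Longrightarrow> False"
    by auto
qed

lemma increasing_slopes:
  fixes xa xb xc ya yb yc :: real
  assumes "xa < xb" "xb < xc" "(xb - xa) * (yc - ya) - (yb - ya) * (xc - xa) > 0"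
  shows "(yb - ya) / (xb - xa) < (yc - ya) / (xc - xa)"
    and "(yc - ya) / (xc - xa) < (yc - yb) / (xc - xb)"
  using assms by (simp_all add: field_simps)

lemma convex_chain_supporting_slope:
  fixes x y :: "nat \<Rightarrow> real"
  assumes x: "\<And>i j. i < j \<Longrightarrow> x i < x j"
    and convex: "\<And>i j k. i < j \<Longrightarrow> j < k \<Longrightarrow> (x j - x i) * (y k - y i) - (y j - y i) * (x k - x i) > 0"
  obtains s where "\<And>i. i \<noteq> j \<Longrightarrow> y j - s * x j < y i - s * x i"
proof -
  define sl where "sl i k = (y k - y i) / (x k - x i)" for i k
  have sl: "sl i j < sl i k" "sl i k < sl j k" if "i < j" "j < k" for i j k
    using increasing_slopes[OF x[OF that(1)] x[OF that(2)] convex[OF that]] by (simp_all add: sl_def)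
  define s where "s = (if j = 0 then sl 0 1 - 1 else (sl (j - 1) j + sl j (j + 1)) / 2)"
  have left: "sl i j < s" if "i < j" for i
  proof -
    have "sl i j \<le> sl (j - 1) j"
    proof (cases "i = j - 1")
      case False
      with that have "i < j - 1"
        by linarith
      then show ?thesis
        using sl(2)[of i "j - 1" j] that by simp
    qed simp
    also have "\<dots> < s"
      using sl[of "j - 1" j "j + 1"] that by (auto simp: s_def)
    finally show ?thesis .
  qed
  have right: "s < sl j i" if "j < i" for i
  proof -
    have "s < sl j (j + 1)"
      using sl[of "j - 1" j "j + 1"] by (cases "j = 0") (auto simp: s_def)
    also have "\<dots> \<le> sl j i"
      using sl(1)[of j "j + 1" i] that by (cases "i = j + 1") auto
    finally show ?thesis .
  qed
  show ?thesis
  proof (rule that)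
    fix i assume "i \<noteq> j"
    then consider "i < j" | "j < i" by linarith
    then show "y j - s * x j < y i - s * x i"
    proof cases
      case 1
      then show ?thesis
        using left[OF 1] x[OF 1] by (simp add: sl_def field_simps)
    next
      case 2
      then show ?thesis
        using right[OF 2] x[OF 2] by (simp add: sl_def field_simps)
    qed
  qed
qed

lemma convexly_independent_if_convex_chain:
  fixes q :: "nat \<Rightarrow> 'a::real_vector" and l1 l2 :: "'a \<Rightarrow> real"
  assumes "linear l1" "linear l2"
    and "\<And>i j. i < j \<Longrightarrow> l1 (q i) < l1 (q j)"
    and "\<And>i j k. i < j \<Longrightarrow> j < k \<Longrightarrow> orientation l1 l2 (q i) (q j) (q k) > 0"
  shows "convexly_independent (range q)"
  unfolding convexly_independent_def
proof
  fix z assume "z \<in> range q"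
  then obtain j where j: "z = q j" by auto
  obtain s where s: "\<And>i. i \<noteq> j \<Longrightarrow> l2 (q j) - s * l1 (q j) < l2 (q i) - s * l1 (q i)"
    using convex_chain_supporting_slope[of "l1 \<circ> q" "l2 \<circ> q" j] assms(3,4)
    unfolding orientation_def comp_def by blast
  have "linear (\<lambda>v. l2 v - s * l1 v)"
    using assms(1,2) real_vector.module_hom_scale[of l1 s] by (simp add: linear_compose_sub)
  then show "z \<notin> convex hull (range q - {z})"
    unfolding j by (rule notin_convex_hull_if_linear_below) (auto intro!: s)
qed

lemma convexly_independent_if_monochromatic:
  fixes q :: "nat \<Rightarrow> 'a::real_vector" and l1 l2 :: "'a \<Rightarrow> real"
  assumes l: "linear l1" "linear l2"
    and order: "\<And>i j. i < j \<Longrightarrow> l1 (q i) \<noteq> l1 (q j)" "\<And>i j. i < j \<Longrightarrow> (l1 (q i) < l1 (q j)) = b1"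
    and orient: "\<And>i j k. i < j \<Longrightarrow> j < k \<Longrightarrow> orientation l1 l2 (q i) (q j) (q k) \<noteq> 0"
      "\<And>i j k. i < j \<Longrightarrow> j < k \<Longrightarrow> (orientation l1 l2 (q i) (q j) (q k) > 0) = b2"
  shows "convexly_independent (range q)"
proof -
  define \<sigma>1 :: real where "\<sigma>1 = (if b1 then 1 else -1)"
  define \<sigma>2 :: real where "\<sigma>2 = (if b2 then 1 else -1)"
  show ?thesis
  proof (rule convexly_independent_if_convex_chain)
    show "linear (\<lambda>v. \<sigma>1 * l1 v)" "linear (\<lambda>v. (\<sigma>1 * \<sigma>2) * l2 v)"
      using l real_vector.module_hom_scale[of l1 \<sigma>1] real_vector.module_hom_scale[of l2 "\<sigma>1 * \<sigma>2"]
      by simp_all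
    show "\<sigma>1 * l1 (q i) < \<sigma>1 * l1 (q j)" if "i < j" for i j
      using order[OF that] by (auto simp: \<sigma>1_def)
    show "orientation (\<lambda>v. \<sigma>1 * l1 v) (\<lambda>v. (\<sigma>1 * \<sigma>2) * l2 v) (q i) (q j) (q k) > 0"
      if "i < j" "j < k" for i j k
      using orient[OF that] by (auto simp: orientation_scale \<sigma>1_def \<sigma>2_def)
  qed
qed

lemma ramsey_ordered_triples:
  fixes P :: "nat \<Rightarrow> nat \<Rightarrow> nat \<Rightarrow> bool"
  obtains e :: "nat \<Rightarrow> nat" and b where "strict_mono e"
    "\<And>i j k. i < j \<Longrightarrow> j < k \<Longrightarrow> P (e i) (e j) (e k) = b"
proof -
  define f where "f T = (let L = sorted_list_of_set T in if P (L ! 0) (L ! 1) (L ! 2) then 1 else 0 :: nat)"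
    for T :: "nat set"
  have "\<forall>T. T \<subseteq> UNIV \<and> finite T \<and> card T = 3 \<longrightarrow> f T < 2"
    by (simp add: f_def Let_def)
  then obtain Y t where Y: "infinite Y" "t < 2"
    and mono: "\<forall>T. T \<subseteq> Y \<and> finite T \<and> card T = 3 \<longrightarrow> f T = t"
    using Ramsey[of "UNIV :: nat set" 3 f 2] by auto
  define e where "e = enumerate Y"
  have e: "strict_mono e" "\<And>n. e n \<in> Y"
    unfolding e_def using strict_mono_enumerate enumerate_in_set Y(1) by auto
  show ?thesis
  proof (rule that[OF e(1)])
    fix i j k :: nat
    assume "i < j" "j < k"
    then have "e i < e j" "e j < e k"
      using e(1) by (simp_all add: strict_mono_less)
    then have "f {e i, e j, e k} = (if P (e i) (e j) (e k) then 1 else 0)"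
      by (simp add: f_def)
    moreover have "f {e i, e j, e k} = t"
      using mono e(2) \<open>e i < e j\<close> \<open>e j < e k\<close> by simp
    ultimately show "P (e i) (e j) (e k) = (t = 1)"
      using Y(2) by auto
  qed
qed

lemma obtain_convexly_independent_subsequence:
  fixes p :: "nat \<Rightarrow> 'a::real_vector" and l1 l2 :: "'a \<Rightarrow> real"
  assumes l: "linear l1" "linear l2"
    and order: "\<And>i j. i < j \<Longrightarrow> l1 (p i) \<noteq> l1 (p j)"
    and orient: "\<And>i j k. i < j \<Longrightarrow> j < k \<Longrightarrow> orientation l1 l2 (p i) (p j) (p k) \<noteq> 0"
  obtains e :: "nat \<Rightarrow> nat" where "strict_mono e" "convexly_independent (range (p \<circ> e))"
proof -
  obtain e1 :: "nat \<Rightarrow> nat" and b1 where e1: "strict_mono e1"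
    "\<And>i j k. i < j \<Longrightarrow> j < k \<Longrightarrow> (l1 (p (e1 i)) < l1 (p (e1 j))) = b1"
    using ramsey_ordered_triples[of "\<lambda>i j k. l1 (p i) < l1 (p j)"] by blast
  obtain e2 :: "nat \<Rightarrow> nat" and b2 where e2: "strict_mono e2" "\<And>i j k. i < j \<Longrightarrow> j < k \<Longrightarrow>
      (orientation l1 l2 (p (e1 (e2 i))) (p (e1 (e2 j))) (p (e1 (e2 k))) > 0) = b2"
    using ramsey_ordered_triples[of "\<lambda>i j k. orientation l1 l2 (p (e1 i)) (p (e1 j)) (p (e1 k)) > 0"]
    by blast
  have e: "strict_mono (e1 \<circ> e2)"
    using e1(1) e2(1) by (rule strict_mono_o)
  have "convexly_independent (range (p \<circ> (e1 \<circ> e2)))"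
  proof (rule convexly_independent_if_monochromatic[OF l])
    fix i j k :: nat
    assume ij: "i < j"
    show "l1 ((p \<circ> (e1 \<circ> e2)) i) \<noteq> l1 ((p \<circ> (e1 \<circ> e2)) j)"
      using order[OF strict_monoD[OF e ij]] by simp
    show "(l1 ((p \<circ> (e1 \<circ> e2)) i) < l1 ((p \<circ> (e1 \<circ> e2)) j)) = b1"
      using e1(2)[OF strict_monoD[OF e2(1) ij] strict_monoD[OF e2(1) lessI]] by simp
    assume jk: "j < k"
    show "orientation l1 l2 ((p \<circ> (e1 \<circ> e2)) i) ((p \<circ> (e1 \<circ> e2)) j) ((p \<circ> (e1 \<circ> e2)) k) \<noteq> 0"
      using orient[OF strict_monoD[OF e ij] strict_monoD[OF e jk]] by simp
    show "(orientation l1 l2 ((p \<circ> (e1 \<circ> e2)) i) ((p \<circ> (e1 \<circ> e2)) j) ((p \<circ> (e1 \<circ> e2)) k) > 0) = b2"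
      using e2(2)[OF ij jk] by simp
  qed
  with e show ?thesis
    by (rule that)
qed

theorem corollary5p3:
  fixes X :: "'a::real_vector set"
  assumes "\<forall>n::nat. \<exists>Y. Y \<subseteq> X \<and> finite Y \<and> card Y \<ge> n \<and> convexly_independent Y"
  shows "\<exists>Y. Y \<subseteq> X \<and> infinite Y \<and> convexly_independent Y"
proof -
  obtain p :: "nat \<Rightarrow> 'a" where "\<forall>n. p n \<in> X \<and> p n \<notin> joining_lines (p ` {..<n})"
    using exists_greedy_seq[OF exists_outside_joining_lines[OF assms]] ..
  then have p: "\<And>n. p n \<in> X" "\<And>n. p n \<notin> joining_lines (p ` {..<n})"
    by simp_all
  have "\<not> collinear {p i, p j, p k}" if "i < j" "j < k" for i j k
    using not_collinear_if_outside_joining_lines[OF p(2) that] .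
  then obtain l1 l2 :: "'a \<Rightarrow> real" where l: "linear l1" "linear l2"
    and order: "\<And>i j. i < j \<Longrightarrow> l1 (p i) \<noteq> l1 (p j)"
    and orient: "\<And>i j k. i < j \<Longrightarrow> j < k \<Longrightarrow> orientation l1 l2 (p i) (p j) (p k) \<noteq> 0"
    using obtain_generic_planar_projection[of p] by blast
  obtain e :: "nat \<Rightarrow> nat" where e: "strict_mono e" and ci: "convexly_independent (range (p \<circ> e))"
    by (rule obtain_convexly_independent_subsequence[OF l order orient])
  have "inj (p \<circ> e)"
  proof (rule linorder_injI)
    show "(p \<circ> e) i \<noteq> (p \<circ> e) j" if "i < j" for i j
      using order[OF strict_monoD[OF e that]] by auto
  qed
  then have "infinite (range (p \<circ> e))"
    by (rule range_inj_infinite)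
  moreover have "range (p \<circ> e) \<subseteq> X"
    using p(1) by auto
  ultimately show ?thesis
    using ci by blast
qed

end
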